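(* Let $N \geq 1$ and let $\mu$ be the uniform probability measure on the hypercube $\{0,1\}^N$. Let $\nu$ be any probability measure on $\{0,1\}^N$ satisfying $I(\nu|\mu) \geq 4W_1(\nu,\mu)$. Then $$H(\nu|\mu) \leq 2\sqrt{W_1(\nu,\mu)\, I(\nu|\mu)} - 2W_1(\nu,\mu).$$
   Context: For $x \in \{0,1\}^N$ and $i \in \{1,\dots,N\}$, $x^i$ denotes the configuration obtained from $x$ by flipping its $i$-th coordinate. Let $\rho = d\nu/d\mu$. The relative entropy is $H(\nu|\mu) = \sum_{x} \rho(x)\log\rho(x)\,\mu(x)$ (with $0\log 0 = 0$). The discrete (modified) Fisher information is $$I(\nu|\mu) = \frac{1}{2}\sum_{x\in\{0,1\}^N}\sum_{i=1}^N \big(\rho(x^i)-\rho(x)\big)\big(\log\rho(x^i)-\log\rho(x)\big)\mu(x),$$ with the value $+\infty$ if some term is infinite. The distance $W_1(\nu,\mu) = \inf \mathbb{E}[d(X,Y)]$, where the infimum is over all couplings of $X\sim\nu$ and $Y\sim\mu$, and $d$ is the Hamming distance on $\{0,1\}^N$. *)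

theory Defs
  imports "HOL-Analysis.Analysis"
begin

definition cube :: "nat \<Rightarrow> bool list set" where
  "cube N = {xs. length xs = N}"

definition flip :: "bool list \<Rightarrow> nat \<Rightarrow> bool list" where
  "flip x i = x[i := \<not> x ! i]"

definition hamming :: "bool list \<Rightarrow> bool list \<Rightarrow> nat" where
  "hamming x y = card {i. i < length x \<and> x ! i \<noteq> y ! i}"

definition unif :: "nat \<Rightarrow> bool list \<Rightarrow> real" where
  "unif N x = 1 / 2 ^ N"

definition is_prob :: "nat \<Rightarrow> (bool list \<Rightarrow> real) \<Rightarrow> bool" where
  "is_prob N \<nu> \<longleftrightarrow> (\<forall>x\<in>cube N. \<nu> x \<ge> 0) \<and> (\<Sum>x\<in>cube N. \<nu> x) = 1"

definition dens :: "nat \<Rightarrow> (bool list \<Rightarrow> real) \<Rightarrow> bool list \<Rightarrow> real" where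
  "dens N \<nu> x = \<nu> x / unif N x"

definition rel_entropy :: "nat \<Rightarrow> (bool list \<Rightarrow> real) \<Rightarrow> real" where
  "rel_entropy N \<nu> =
     (\<Sum>x\<in>cube N. (if dens N \<nu> x = 0 then 0 else dens N \<nu> x * ln (dens N \<nu> x)) * unif N x)"

text \<open>Modified Fisher information, +infinity if some term is infinite
  (i.e. exactly one of rho(x), rho(x^i) vanishes); terms with both zero are 0.\<close>
definition fisher_info :: "nat \<Rightarrow> (bool list \<Rightarrow> real) \<Rightarrow> ereal" where
  "fisher_info N \<nu> =
    (if \<exists>x\<in>cube N. \<exists>i<N. (dens N \<nu> (flip x i) = 0) \<noteq> (dens N \<nu> x = 0) then \<infinity>
     else ereal (1/2 * (\<Sum>x\<in>cube N. \<Sum>i<N.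
        (if dens N \<nu> x = 0 \<and> dens N \<nu> (flip x i) = 0 then 0 else
          (dens N \<nu> (flip x i) - dens N \<nu> x) * (ln (dens N \<nu> (flip x i)) - ln (dens N \<nu> x)))
        * unif N x)))"

definition is_coupling :: "nat \<Rightarrow> (bool list \<Rightarrow> real) \<Rightarrow> (bool list \<Rightarrow> real)
     \<Rightarrow> (bool list \<Rightarrow> bool list \<Rightarrow> real) \<Rightarrow> bool" where
  "is_coupling N \<nu> \<mu> \<pi> \<longleftrightarrow>
     (\<forall>x\<in>cube N. \<forall>y\<in>cube N. \<pi> x y \<ge> 0) \<and>
     (\<forall>x\<in>cube N. (\<Sum>y\<in>cube N. \<pi> x y) = \<nu> x) \<and>
     (\<forall>y\<in>cube N. (\<Sum>x\<in>cube N. \<pi> x y) = \<mu> y)"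

definition W1 :: "nat \<Rightarrow> (bool list \<Rightarrow> real) \<Rightarrow> (bool list \<Rightarrow> real) \<Rightarrow> real" where
  "W1 N \<nu> \<mu> = Inf {(\<Sum>x\<in>cube N. \<Sum>y\<in>cube N. \<pi> x y * real (hamming x y)) | \<pi>.
                     is_coupling N \<nu> \<mu> \<pi>}"

end

(*
  Let rho be the density of nu and T = T_q the noise operator that flips every coordinate
  independently with probability q <= 1/2. Along the noise the entropy drops by at most
  (q/2) sum_i F_i(rho) = q I: each single-coordinate step loses at most q/2 F_i by the tangent
  line of x ln x, and F_i does not increase under averaging by the joint convexity of
  (a - b)(ln a - ln b). On the other hand T rho(x^i) <= (1-q)/q T rho(x), so ln T rho, and with
  it G = T (ln T rho), is ln((1-q)/q)-Lipschitz along edges of the cube. Since T is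
  self-adjoint and E_mu[G] = E_mu[ln T rho] <= 0, the easy half of Kantorovich duality gives
  H(T rho) = E_nu[G] <= E_nu[G] - E_mu[G] <= ln((1-q)/q) W1 <= (1/q - 2) W1.
  Hence H <= q I + (1/q - 2) W1 for all q in (0, 1/2], and q = sqrt (W1 / I) gives the claim.
  Finite Fisher information forces rho > 0 because the cube is connected.
*)
theory Submission
  imports Defs
begin

lemma card_cube: "card (cube N) = 2 ^ N"
  using card_lists_length_eq[of "UNIV :: bool set" N] by (simp add: cube_def card_UNIV_bool)

lemma flip_in_cube [simp]: "x \<in> cube N \<Longrightarrow> flip x i \<in> cube N"
  by (simp add: cube_def flip_def)

lemma flip_flip [simp]: "flip (flip x i) i = x"
  by (cases "i < length x") (auto simp: flip_def list_update_beyond)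

lemma flip_commute: "flip (flip x i) j = flip (flip x j) i"
  by (cases "i = j"; cases "i < length x"; cases "j < length x")
     (auto simp: flip_def list_update_swap list_update_beyond)

lemma sum_cube_flip: "(\<Sum>x\<in>cube N. f (flip x i)) = (\<Sum>x\<in>cube N. f x)"
  by (rule sum.reindex_bij_witness[where i="\<lambda>x. flip x i" and j="\<lambda>x. flip x i"]) auto

definition flip_lipschitz :: "nat \<Rightarrow> real \<Rightarrow> (bool list \<Rightarrow> real) \<Rightarrow> bool" where
  "flip_lipschitz N L G \<longleftrightarrow> (\<forall>x\<in>cube N. \<forall>i<N. \<bar>G (flip x i) - G x\<bar> \<le> L)"

lemma hamming_lipschitz:
  assumes "flip_lipschitz N L G" and "x \<in> cube N" "y \<in> cube N"
  shows "\<bar>G x - G y\<bar> \<le> L * real (hamming x y)"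
  using assms(2,3)
proof (induction "hamming x y" arbitrary: x)
  case 0
  then have "x = y"
    by (auto simp: hamming_def cube_def card_eq_0_iff intro: nth_equalityI)
  with "0.hyps" show ?case by (metis abs_0 diff_self mult_zero_right of_nat_0 order_refl)
next
  case (Suc k)
  let ?D = "{i. i < length x \<and> x ! i \<noteq> y ! i}"
  have "card ?D = Suc k" using Suc.hyps(2) by (simp add: hamming_def)
  then obtain i where i: "i \<in> ?D" by (metis card.empty ex_in_conv nat.distinct(1))
  have "{j. j < length (flip x i) \<and> flip x i ! j \<noteq> y ! j} = ?D - {i}"
    using i by (auto simp: flip_def nth_list_update)
  then have "hamming (flip x i) y = k" using \<open>card ?D = Suc k\<close> i by (simp add: hamming_def)
  then have "\<bar>G (flip x i) - G y\<bar> \<le> L * real k" using Suc.hyps(1)[of "flip x i"] Suc.prems by simp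
  moreover have "\<bar>G (flip x i) - G x\<bar> \<le> L"
    using assms(1) i Suc.prems(1) by (auto simp: flip_lipschitz_def cube_def)
  ultimately show ?case using Suc.hyps(2)[symmetric] by (simp add: algebra_simps)
qed

lemma is_prob_unif: "is_prob N (unif N)"
  by (simp add: is_prob_def unif_def card_cube)

lemma product_coupling:
  assumes "is_prob N \<nu>" "is_prob N \<mu>"
  shows "is_coupling N \<nu> \<mu> (\<lambda>x y. \<nu> x * \<mu> y)"
  using assms by (simp add: is_coupling_def is_prob_def sum_distrib_left[symmetric] sum_distrib_right[symmetric])

lemma coupling_costs_nonempty:
  assumes "is_prob N \<nu>" "is_prob N \<mu>"
  shows "{\<Sum>x\<in>cube N. \<Sum>y\<in>cube N. \<pi> x y * real (hamming x y) | \<pi>. is_coupling N \<nu> \<mu> \<pi>} \<noteq> {}"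
  using product_coupling[OF assms] by blast

lemma W1_nonneg:
  assumes "is_prob N \<nu>" "is_prob N \<mu>"
  shows "0 \<le> W1 N \<nu> \<mu>"
  unfolding W1_def
  by (rule cInf_greatest[OF coupling_costs_nonempty[OF assms]])
     (auto simp: is_coupling_def intro!: sum_nonneg)

lemma coupling_cost_ge:
  assumes \<pi>: "is_coupling N \<nu> \<mu> \<pi>"
    and lip: "\<And>x y. x \<in> cube N \<Longrightarrow> y \<in> cube N \<Longrightarrow> G x - G y \<le> L * real (hamming x y)"
  shows "(\<Sum>x\<in>cube N. \<nu> x * G x) - (\<Sum>y\<in>cube N. \<mu> y * G y)
           \<le> L * (\<Sum>x\<in>cube N. \<Sum>y\<in>cube N. \<pi> x y * real (hamming x y))"
proof -
  have "(\<Sum>x\<in>cube N. \<nu> x * G x) = (\<Sum>x\<in>cube N. \<Sum>y\<in>cube N. \<pi> x y * G x)"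
    using \<pi> by (simp add: is_coupling_def sum_distrib_right[symmetric])
  moreover have "(\<Sum>y\<in>cube N. \<mu> y * G y) = (\<Sum>x\<in>cube N. \<Sum>y\<in>cube N. \<pi> x y * G y)"
    using \<pi> by (simp add: is_coupling_def sum_distrib_right[symmetric] sum.swap[of _ "cube N"])
  ultimately have "(\<Sum>x\<in>cube N. \<nu> x * G x) - (\<Sum>y\<in>cube N. \<mu> y * G y)
      = (\<Sum>x\<in>cube N. \<Sum>y\<in>cube N. \<pi> x y * (G x - G y))"
    by (simp add: sum_subtractf[symmetric] right_diff_distrib)
  also have "\<dots> \<le> (\<Sum>x\<in>cube N. \<Sum>y\<in>cube N. \<pi> x y * (L * real (hamming x y)))"
    using \<pi> lip unfolding is_coupling_def by (intro sum_mono mult_left_mono) auto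
  also have "\<dots> = L * (\<Sum>x\<in>cube N. \<Sum>y\<in>cube N. \<pi> x y * real (hamming x y))"
    by (simp add: sum_distrib_left algebra_simps)
  finally show ?thesis .
qed

lemma W1_ge_lipschitz_gap:
  assumes "is_prob N \<nu>" "is_prob N \<mu>" "L \<ge> 0"
    and lip: "\<And>x y. x \<in> cube N \<Longrightarrow> y \<in> cube N \<Longrightarrow> G x - G y \<le> L * real (hamming x y)"
  shows "(\<Sum>x\<in>cube N. \<nu> x * G x) - (\<Sum>y\<in>cube N. \<mu> y * G y) \<le> L * W1 N \<nu> \<mu>"
proof (cases "L = 0")
  case True
  then show ?thesis
    using coupling_cost_ge[OF product_coupling[OF assms(1,2)], of G L] lip by simp
next
  case False
  with \<open>L \<ge> 0\<close> have "L > 0" by simp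
  let ?gap = "(\<Sum>x\<in>cube N. \<nu> x * G x) - (\<Sum>y\<in>cube N. \<mu> y * G y)"
  have "?gap / L \<le> W1 N \<nu> \<mu>"
    unfolding W1_def
  proof (rule cInf_greatest[OF coupling_costs_nonempty[OF assms(1,2)]])
    fix s assume "s \<in> {\<Sum>x\<in>cube N. \<Sum>y\<in>cube N. \<pi> x y * real (hamming x y) | \<pi>. is_coupling N \<nu> \<mu> \<pi>}"
    then obtain \<pi> where \<pi>: "is_coupling N \<nu> \<mu> \<pi>"
      and s: "s = (\<Sum>x\<in>cube N. \<Sum>y\<in>cube N. \<pi> x y * real (hamming x y))" by blast
    show "?gap / L \<le> s"
      using coupling_cost_ge[OF \<pi> lip] \<open>L > 0\<close> by (simp add: s divide_le_eq mult.commute)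
  qed
  then show ?thesis using \<open>L > 0\<close> by (simp add: divide_le_eq mult.commute)
qed

lemma xlnx_diff_le:
  fixes u v :: real
  assumes "u > 0" "v > 0"
  shows "u * ln u - v * ln v \<le> (ln u + 1) * (u - v)"
proof -
  have "v * ln (u / v) \<le> v * (u / v - 1)"
    using assms by (intro mult_left_mono ln_le_minus_one) auto
  also have "\<dots> = u - v" using assms by (simp add: field_simps)
  finally show ?thesis using assms by (simp add: ln_div algebra_simps)
qed

lemma log_sum_inequality:
  fixes a1 a2 b1 b2 :: real
  assumes "a1 > 0" "a2 > 0" "b1 > 0" "b2 > 0"
  shows "(a1 + a2) * ln ((a1 + a2) / (b1 + b2)) \<le> a1 * ln (a1 / b1) + a2 * ln (a2 / b2)"
proof -
  define r where "r = (a1 + a2) / (b1 + b2)"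
  have "r > 0" using assms by (simp add: r_def)
  have gibbs: "a - b * r \<le> a * ln (a / b) - a * ln r" if "a > 0" "b > 0" for a b
  proof -
    have "a * ln (b * r / a) \<le> a * (b * r / a - 1)"
      using that \<open>r > 0\<close> by (intro mult_left_mono ln_le_minus_one) auto
    also have "\<dots> = b * r - a" using that by (simp add: field_simps)
    finally show ?thesis using that \<open>r > 0\<close> by (simp add: ln_div ln_mult algebra_simps)
  qed
  have "(b1 + b2) * r = a1 + a2" using assms by (simp add: r_def)
  then show ?thesis
    using gibbs[OF assms(1,3)] gibbs[OF assms(2,4)] by (simp add: r_def[symmetric] algebra_simps)
qed

definition fisher_term :: "real \<Rightarrow> real \<Rightarrow> real" where
  "fisher_term a b = (a - b) * (ln a - ln b)"

lemma fisher_term_convex: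
  fixes q :: real
  assumes "a > 0" "b > 0" "c > 0" "d > 0" "0 < q" "q < 1"
  shows "fisher_term ((1 - q) * a + q * c) ((1 - q) * b + q * d)
           \<le> (1 - q) * fisher_term a b + q * fisher_term c d"
proof -
  have kl: "fisher_term a b = a * ln (a / b) + b * ln (b / a)" if "a > 0" "b > 0" for a b :: real
    using that by (simp add: fisher_term_def ln_div algebra_simps)
  have pos: "(1 - q) * a > 0" "(1 - q) * b > 0" "q * c > 0" "q * d > 0"
    using assms by auto
  then have "fisher_term ((1 - q) * a + q * c) ((1 - q) * b + q * d)
      = ((1 - q) * a + q * c) * ln (((1 - q) * a + q * c) / ((1 - q) * b + q * d))
        + ((1 - q) * b + q * d) * ln (((1 - q) * b + q * d) / ((1 - q) * a + q * c))"
    by (intro kl) auto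
  also have "\<dots> \<le> (1 - q) * a * ln (a / b) + q * c * ln (c / d)
                  + ((1 - q) * b * ln (b / a) + q * d * ln (d / c))"
    using log_sum_inequality[OF pos(1,3,2,4)] log_sum_inequality[OF pos(2,4,1,3)] assms
    by (intro add_mono) simp_all
  also have "\<dots> = (1 - q) * fisher_term a b + q * fisher_term c d"
    using assms by (simp add: kl algebra_simps)
  finally show ?thesis .
qed

definition noise :: "real \<Rightarrow> nat \<Rightarrow> (bool list \<Rightarrow> real) \<Rightarrow> bool list \<Rightarrow> real" where
  "noise q i g x = (1 - q) * g x + q * g (flip x i)"

fun noise_upto :: "real \<Rightarrow> nat \<Rightarrow> (bool list \<Rightarrow> real) \<Rightarrow> bool list \<Rightarrow> real" where
  "noise_upto q 0 g = g"
| "noise_upto q (Suc n) g = noise q n (noise_upto q n g)"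

lemma noise_pos:
  assumes "\<forall>x\<in>cube N. g x > 0" "0 \<le> q" "q \<le> 1"
  shows "\<forall>x\<in>cube N. noise q i g x > 0"
proof
  fix x assume "x \<in> cube N"
  then have "g x > 0" "g (flip x i) > 0" using assms(1) by auto
  then show "noise q i g x > 0"
    using assms(2,3) by (cases "q = 1") (auto simp: noise_def intro: add_pos_nonneg)
qed

lemma noise_nonneg:
  "\<forall>x\<in>cube N. g x \<ge> 0 \<Longrightarrow> 0 \<le> q \<Longrightarrow> q \<le> 1 \<Longrightarrow> \<forall>x\<in>cube N. noise q i g x \<ge> 0"
  by (simp add: noise_def)

lemma noise_commute: "noise q i (noise q j g) = noise q j (noise q i g)"
  by (rule ext) (simp add: noise_def flip_commute algebra_simps)

lemma sum_noise: "(\<Sum>x\<in>cube N. noise q i g x) = (\<Sum>x\<in>cube N. g x)"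
proof -
  have "(\<Sum>x\<in>cube N. noise q i g x)
      = (1 - q) * (\<Sum>x\<in>cube N. g x) + q * (\<Sum>x\<in>cube N. g (flip x i))"
    by (simp add: noise_def sum.distrib sum_distrib_left)
  then show ?thesis by (simp add: sum_cube_flip algebra_simps)
qed

lemma sum_noise_mult: "(\<Sum>x\<in>cube N. noise q i h x * F x) = (\<Sum>x\<in>cube N. h x * noise q i F x)"
proof -
  have "(\<Sum>x\<in>cube N. h (flip x i) * F x) = (\<Sum>x\<in>cube N. h x * F (flip x i))"
    using sum_cube_flip[where f="\<lambda>x. h x * F (flip x i)" and i=i and N=N] by simp
  moreover have "(\<Sum>x\<in>cube N. noise q i h x * F x)
      = (1 - q) * (\<Sum>x\<in>cube N. h x * F x) + q * (\<Sum>x\<in>cube N. h (flip x i) * F x)"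
    and "(\<Sum>x\<in>cube N. h x * noise q i F x)
      = (1 - q) * (\<Sum>x\<in>cube N. h x * F x) + q * (\<Sum>x\<in>cube N. h x * F (flip x i))"
    unfolding sum_distrib_left sum.distrib[symmetric]
    by (simp_all add: noise_def algebra_simps)
  ultimately show ?thesis by simp
qed

lemma noise_upto_pos:
  "\<forall>x\<in>cube N. g x > 0 \<Longrightarrow> 0 \<le> q \<Longrightarrow> q \<le> 1 \<Longrightarrow> \<forall>x\<in>cube N. noise_upto q n g x > 0"
  by (induction n) (simp_all add: noise_pos)

lemma noise_upto_nonneg:
  "\<forall>x\<in>cube N. g x \<ge> 0 \<Longrightarrow> 0 \<le> q \<Longrightarrow> q \<le> 1 \<Longrightarrow> \<forall>x\<in>cube N. noise_upto q n g x \<ge> 0"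
  by (induction n) (simp_all add: noise_nonneg)

lemma sum_noise_upto: "(\<Sum>x\<in>cube N. noise_upto q n g x) = (\<Sum>x\<in>cube N. g x)"
  by (induction n) (simp_all add: sum_noise)

lemma noise_upto_noise_commute: "noise_upto q n (noise q i g) = noise q i (noise_upto q n g)"
  by (induction n) (simp_all add: noise_commute)

lemma sum_noise_upto_mult:
  "(\<Sum>x\<in>cube N. noise_upto q n h x * F x) = (\<Sum>x\<in>cube N. h x * noise_upto q n F x)"
  by (induction n arbitrary: F) (simp_all add: sum_noise_mult noise_upto_noise_commute)

definition ent_sum :: "nat \<Rightarrow> (bool list \<Rightarrow> real) \<Rightarrow> real" where
  "ent_sum N g = (\<Sum>x\<in>cube N. g x * ln (g x))"

definition fisher_sum :: "nat \<Rightarrow> nat \<Rightarrow> (bool list \<Rightarrow> real) \<Rightarrow> real" where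
  "fisher_sum N i g = (\<Sum>x\<in>cube N. fisher_term (g (flip x i)) (g x))"

lemma fisher_sum_eq: "fisher_sum N i g = 2 * (\<Sum>x\<in>cube N. ln (g x) * (g x - g (flip x i)))"
proof -
  have "(\<Sum>x\<in>cube N. ln (g (flip x i)) * (g (flip x i) - g x))
      = (\<Sum>x\<in>cube N. ln (g x) * (g x - g (flip x i)))"
    using sum_cube_flip[where f="\<lambda>x. ln (g x) * (g x - g (flip x i))" and i=i and N=N] by simp
  moreover have "fisher_sum N i g = (\<Sum>x\<in>cube N. ln (g (flip x i)) * (g (flip x i) - g x))
                                    + (\<Sum>x\<in>cube N. ln (g x) * (g x - g (flip x i)))"
    unfolding fisher_sum_def fisher_term_def sum.distrib[symmetric]
    by (intro sum.cong refl) (simp add: algebra_simps)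
  ultimately show ?thesis by simp
qed

lemma ent_sum_noise_ge:
  assumes pos: "\<forall>x\<in>cube N. g x > 0" and "0 \<le> q" "q \<le> 1"
  shows "ent_sum N g - ent_sum N (noise q i g) \<le> q / 2 * fisher_sum N i g"
proof -
  have "\<forall>x\<in>cube N. noise q i g x > 0" using noise_pos[OF assms] .
  then have "ent_sum N g - ent_sum N (noise q i g) \<le> (\<Sum>x\<in>cube N. (ln (g x) + 1) * (g x - noise q i g x))"
    unfolding ent_sum_def sum_subtractf[symmetric] using pos by (intro sum_mono xlnx_diff_le) auto
  also have "\<dots> = q * (\<Sum>x\<in>cube N. ln (g x) * (g x - g (flip x i))) + q * (\<Sum>x\<in>cube N. g x - g (flip x i))"
    unfolding sum_distrib_left sum.distrib[symmetric] by (simp add: noise_def algebra_simps)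
  also have "(\<Sum>x\<in>cube N. g x - g (flip x i)) = 0"
    by (simp add: sum_subtractf sum_cube_flip)
  finally show ?thesis by (simp add: fisher_sum_eq)
qed

lemma fisher_sum_noise_le:
  assumes "\<forall>x\<in>cube N. g x > 0" and "0 < q" "q < 1"
  shows "fisher_sum N i (noise q j g) \<le> fisher_sum N i g"
proof -
  have "fisher_sum N i (noise q j g)
      = (\<Sum>x\<in>cube N. fisher_term ((1 - q) * g (flip x i) + q * g (flip (flip x j) i))
                                   ((1 - q) * g x + q * g (flip x j)))"
    by (simp add: fisher_sum_def noise_def flip_commute)
  also have "\<dots> \<le> (\<Sum>x\<in>cube N. (1 - q) * fisher_term (g (flip x i)) (g x)
                                + q * fisher_term (g (flip (flip x j) i)) (g (flip x j)))"
    using assms by (intro sum_mono fisher_term_convex) auto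
  also have "\<dots> = (1 - q) * fisher_sum N i g
                  + q * (\<Sum>x\<in>cube N. fisher_term (g (flip (flip x j) i)) (g (flip x j)))"
    by (simp add: fisher_sum_def sum.distrib sum_distrib_left)
  also have "(\<Sum>x\<in>cube N. fisher_term (g (flip (flip x j) i)) (g (flip x j))) = fisher_sum N i g"
    unfolding fisher_sum_def by (rule sum_cube_flip)
  finally show ?thesis by (simp add: algebra_simps)
qed

lemma fisher_sum_noise_upto_le:
  assumes "\<forall>x\<in>cube N. g x > 0" and "0 < q" "q < 1"
  shows "fisher_sum N i (noise_upto q n g) \<le> fisher_sum N i g"
proof (induction n)
  case (Suc n)
  have "fisher_sum N i (noise_upto q (Suc n) g) \<le> fisher_sum N i (noise_upto q n g)"
    using fisher_sum_noise_le[OF noise_upto_pos[OF assms(1)]] assms(2,3) by simp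
  with Suc show ?case by simp
qed simp

lemma ent_sum_noise_upto_ge:
  assumes "\<forall>x\<in>cube N. g x > 0" and "0 < q" "q < 1"
  shows "ent_sum N g - ent_sum N (noise_upto q n g) \<le> q / 2 * (\<Sum>i<n. fisher_sum N i g)"
proof (induction n)
  case (Suc n)
  have "ent_sum N (noise_upto q n g) - ent_sum N (noise_upto q (Suc n) g)
      \<le> q / 2 * fisher_sum N n (noise_upto q n g)"
    using ent_sum_noise_ge[OF noise_upto_pos[OF assms(1)]] assms(2,3) by simp
  also have "\<dots> \<le> q / 2 * fisher_sum N n g"
    using fisher_sum_noise_upto_le[OF assms] assms(2) by (intro mult_left_mono) auto
  finally show ?case using Suc by (simp add: distrib_left)
qed simp

lemma noise_flip_lipschitz:
  assumes lip: "flip_lipschitz N L G" and "0 \<le> q" "q \<le> 1"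
  shows "flip_lipschitz N L (noise q j G)"
  unfolding flip_lipschitz_def
proof (intro ballI allI impI)
  fix x i assume "x \<in> cube N" "i < N"
  then have "\<bar>G (flip x i) - G x\<bar> \<le> L" "\<bar>G (flip (flip x j) i) - G (flip x j)\<bar> \<le> L"
    using lip by (auto simp: flip_lipschitz_def)
  moreover have "noise q j G (flip x i) - noise q j G x
      = (1 - q) * (G (flip x i) - G x) + q * (G (flip (flip x j) i) - G (flip x j))"
    by (simp add: noise_def flip_commute algebra_simps)
  ultimately have "\<bar>noise q j G (flip x i) - noise q j G x\<bar> \<le> (1 - q) * L + q * L"
    using assms(2,3) by (auto intro!: order.trans[OF abs_triangle_ineq] add_mono mult_left_mono
        simp: abs_mult)
  then show "\<bar>noise q j G (flip x i) - noise q j G x\<bar> \<le> L" by (simp add: algebra_simps)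
qed

lemma noise_upto_flip_lipschitz:
  "flip_lipschitz N L G \<Longrightarrow> 0 \<le> q \<Longrightarrow> q \<le> 1 \<Longrightarrow> flip_lipschitz N L (noise_upto q n G)"
  by (induction n) (simp_all add: noise_flip_lipschitz)

lemma noise_upto_flip_le:
  assumes nonneg: "\<forall>x\<in>cube N. g x \<ge> 0" and q: "0 < q" "q \<le> 1/2"
    and "i < n" "x \<in> cube N"
  shows "noise_upto q n g (flip x i) \<le> (1 - q) / q * noise_upto q n g x"
  using assms(4,5)
proof (induction n arbitrary: i x)
  case (Suc n)
  let ?h = "noise_upto q n g" and ?c = "(1 - q) / q"
  show ?case
  proof (cases "i < n")
    case True
    then have "?h (flip x i) \<le> ?c * ?h x" "?h (flip (flip x n) i) \<le> ?c * ?h (flip x n)"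
      using Suc by auto
    then have "(1 - q) * ?h (flip x i) + q * ?h (flip (flip x n) i)
        \<le> (1 - q) * (?c * ?h x) + q * (?c * ?h (flip x n))"
      using q by (intro add_mono mult_left_mono) auto
    also have "\<dots> = ?c * ((1 - q) * ?h x + q * ?h (flip x n))"
      by (simp only: distrib_left mult.left_commute)
    finally show ?thesis by (simp add: noise_def flip_commute)
  next
    case False
    with Suc.prems have [simp]: "i = n" by simp
    have "?h x \<ge> 0" "?h (flip x n) \<ge> 0" using noise_upto_nonneg[OF nonneg] q Suc.prems by auto
    moreover have "q \<le> ?c * (1 - q)"
      using q mult_mono[of q "1 - q" q "1 - q"] by (simp add: field_simps)
    ultimately have "q * ?h x \<le> ?c * (1 - q) * ?h x"
      by (intro mult_right_mono) auto
    moreover have "?c * q = 1 - q" using q by simp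
    ultimately have "(1 - q) * ?h (flip x n) + q * ?h x \<le> ?c * ((1 - q) * ?h x + q * ?h (flip x n))"
      by (simp add: distrib_left mult.assoc[symmetric])
    then show ?thesis by (simp add: noise_def)
  qed
qed simp

lemma flip_lipschitz_ln:
  assumes pos: "\<forall>x\<in>cube N. h x > 0" and "c > 0"
    and ratio: "\<forall>x\<in>cube N. \<forall>i<N. h (flip x i) \<le> c * h x"
  shows "flip_lipschitz N (ln c) (\<lambda>x. ln (h x))"
  unfolding flip_lipschitz_def
proof (intro ballI allI impI)
  have ln_le: "ln (h y) - ln (h x) \<le> ln c" if "x \<in> cube N" "y \<in> cube N" "h y \<le> c * h x" for x y
  proof -
    have "h x > 0" "h y > 0" using that pos by auto
    then have "ln (h y) \<le> ln (c * h x)" using that \<open>c > 0\<close> by simp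
    then show ?thesis using \<open>h x > 0\<close> \<open>c > 0\<close> by (simp add: ln_mult)
  qed
  fix x i assume "x \<in> cube N" "i < N"
  then show "\<bar>ln (h (flip x i)) - ln (h x)\<bar> \<le> ln c"
    using ln_le[of x "flip x i"] ln_le[of "flip x i" x] ratio
    by (metis abs_le_iff flip_flip flip_in_cube minus_diff_eq)
qed

lemma dens_eq: "dens N \<nu> x = 2 ^ N * \<nu> x"
  by (simp add: dens_def unif_def)

lemma sum_dens: "is_prob N \<nu> \<Longrightarrow> (\<Sum>x\<in>cube N. dens N \<nu> x) = 2 ^ N"
  by (simp add: dens_eq is_prob_def sum_distrib_left[symmetric])

lemma ent_sum_noise_dens_le:
  assumes prob: "is_prob N \<nu>" and pos: "\<forall>x\<in>cube N. dens N \<nu> x > 0" and q: "0 < q" "q \<le> 1/2"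
  shows "ent_sum N (noise_upto q N (dens N \<nu>)) \<le> 2 ^ N * (ln ((1 - q) / q) * W1 N \<nu> (unif N))"
proof -
  define \<rho> where "\<rho> = noise_upto q N (dens N \<nu>)"
  define L where "L = ln ((1 - q) / q)"
  define G where "G = noise_upto q N (\<lambda>x. ln (\<rho> x))"
  have \<rho>_pos: "\<forall>x\<in>cube N. \<rho> x > 0"
    using noise_upto_pos[OF pos] q by (simp add: \<rho>_def)
  have "flip_lipschitz N L (\<lambda>x. ln (\<rho> x))"
    unfolding L_def \<rho>_def using q pos
    by (intro flip_lipschitz_ln noise_upto_pos ballI allI impI noise_upto_flip_le) auto
  then have "flip_lipschitz N L G"
    unfolding G_def using q by (intro noise_upto_flip_lipschitz) auto
  moreover have "L \<ge> 0" using q by (simp add: L_def)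
  ultimately have gap: "(\<Sum>x\<in>cube N. \<nu> x * G x) - (\<Sum>x\<in>cube N. unif N x * G x) \<le> L * W1 N \<nu> (unif N)"
    using hamming_lipschitz[of N L G] abs_le_D1
    by (intro W1_ge_lipschitz_gap[OF prob is_prob_unif]) blast+
  have "(\<Sum>x\<in>cube N. G x) = (\<Sum>x\<in>cube N. ln (\<rho> x))"
    by (simp add: G_def sum_noise_upto)
  also have "\<dots> \<le> (\<Sum>x\<in>cube N. \<rho> x - 1)"
    using \<rho>_pos by (intro sum_mono ln_le_minus_one) auto
  also have "\<dots> = 0"
    using sum_dens[OF prob] by (simp add: sum_subtractf \<rho>_def sum_noise_upto card_cube)
  finally have "(\<Sum>x\<in>cube N. G x) \<le> 0" .
  moreover have "ent_sum N \<rho> = (\<Sum>x\<in>cube N. dens N \<nu> x * G x)"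
    unfolding ent_sum_def \<rho>_def G_def by (rule sum_noise_upto_mult)
  ultimately have "ent_sum N \<rho> \<le> (\<Sum>x\<in>cube N. dens N \<nu> x * G x) - (\<Sum>x\<in>cube N. G x)"
    by simp
  also have "\<dots> = 2 ^ N * ((\<Sum>x\<in>cube N. \<nu> x * G x) - (\<Sum>x\<in>cube N. unif N x * G x))"
    by (simp add: dens_eq unif_def right_diff_distrib sum_distrib_left
        sum_divide_distrib[symmetric] algebra_simps)
  also have "\<dots> \<le> 2 ^ N * (L * W1 N \<nu> (unif N))"
    using gap by simp
  finally show ?thesis by (simp add: \<rho>_def L_def)
qed

text \<open>No positivity is needed here since 0 * ln 0 = 0.\<close>
lemma rel_entropy_eq: "rel_entropy N \<nu> = ent_sum N (dens N \<nu>) / 2 ^ N"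
  unfolding rel_entropy_def ent_sum_def unif_def sum_divide_distrib by (intro sum.cong) auto

lemma fisher_info_eq:
  assumes "fisher_info N \<nu> \<noteq> \<infinity>"
  shows "fisher_info N \<nu> = ereal ((\<Sum>i<N. fisher_sum N i (dens N \<nu>)) / (2 * 2 ^ N))"
proof -
  have "fisher_info N \<nu> = ereal (1/2 * (\<Sum>x\<in>cube N. \<Sum>i<N. fisher_term (dens N \<nu> (flip x i)) (dens N \<nu> x) / 2 ^ N))"
    using assms unfolding fisher_info_def
    by (auto simp: fisher_term_def unif_def split: if_splits intro!: sum.cong)
  then show ?thesis
    by (simp add: fisher_sum_def sum.swap[of _ "cube N"] sum_divide_distrib mult.commute)
qed

lemma dens_pos_of_fisher_finite:
  assumes prob: "is_prob N \<nu>" and finite: "fisher_info N \<nu> \<noteq> \<infinity>"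
  shows "\<forall>x\<in>cube N. dens N \<nu> x > 0"
proof
  define Z where "Z x = (if dens N \<nu> x = 0 then 1 else 0 :: real)" for x
  have "flip_lipschitz N 0 Z"
    using finite by (auto simp: flip_lipschitz_def Z_def fisher_info_def split: if_splits)
  have "(\<Sum>x\<in>cube N. \<nu> x) \<noteq> 0" using prob by (simp add: is_prob_def)
  then obtain x0 where x0: "x0 \<in> cube N" "\<nu> x0 \<noteq> 0" by (meson sum.neutral)
  fix x assume x: "x \<in> cube N"
  have "Z x = Z x0" using hamming_lipschitz[OF \<open>flip_lipschitz N 0 Z\<close> x x0(1)] by simp
  then have "dens N \<nu> x \<noteq> 0" using x0(2) by (simp add: Z_def dens_eq split: if_splits)
  moreover have "dens N \<nu> x \<ge> 0" using prob x by (simp add: dens_eq is_prob_def)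
  ultimately show "dens N \<nu> x > 0" by simp
qed

lemma rel_entropy_le_noise_bound:
  assumes prob: "is_prob N \<nu>" and pos: "\<forall>x\<in>cube N. dens N \<nu> x > 0" and q: "0 < q" "q \<le> 1/2"
  shows "rel_entropy N \<nu> \<le> q * ((\<Sum>i<N. fisher_sum N i (dens N \<nu>)) / (2 * 2 ^ N))
                              + (1/q - 2) * W1 N \<nu> (unif N)"
proof -
  let ?\<rho> = "dens N \<nu>" and ?W = "W1 N \<nu> (unif N)"
  have "ln ((1 - q) / q) \<le> (1 - q) / q - 1"
    using q by (intro ln_le_minus_one) simp
  also have "\<dots> = 1/q - 2" using q by (simp add: field_simps)
  finally have "ln ((1 - q) / q) * ?W \<le> (1/q - 2) * ?W"
    using W1_nonneg[OF prob is_prob_unif] by (rule mult_right_mono)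
  then have "ent_sum N (noise_upto q N ?\<rho>) \<le> 2 ^ N * ((1/q - 2) * ?W)"
    using order.trans[OF ent_sum_noise_dens_le[OF assms]] by simp
  moreover have "ent_sum N ?\<rho> - ent_sum N (noise_upto q N ?\<rho>) \<le> q / 2 * (\<Sum>i<N. fisher_sum N i ?\<rho>)"
    using q by (intro ent_sum_noise_upto_ge[OF pos]) auto
  ultimately have "ent_sum N ?\<rho> \<le> 2 ^ N * (q * ((\<Sum>i<N. fisher_sum N i ?\<rho>) / (2 * 2 ^ N)) + (1/q - 2) * ?W)"
    by (simp add: algebra_simps)
  then show ?thesis by (simp add: rel_entropy_eq pos_divide_le_eq mult.commute)
qed

lemma le_optimal_noise_bound:
  fixes H I W :: real
  assumes "0 \<le> W" "4 * W \<le> I"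
    and bound: "\<And>q. 0 < q \<Longrightarrow> q \<le> 1/2 \<Longrightarrow> H \<le> q * I + (1/q - 2) * W"
  shows "H \<le> 2 * sqrt (W * I) - 2 * W"
proof (cases "W = 0")
  case True
  show ?thesis
  proof (rule ccontr)
    assume "\<not> ?thesis"
    with True have "H > 0" by simp
    define q where "q = min (1/2) (H / (2 * (I + 1)))"
    have "I \<ge> 0" using assms(1,2) by simp
    have "0 < q" using \<open>H > 0\<close> \<open>I \<ge> 0\<close> by (simp add: q_def)
    have "q \<le> 1/2" unfolding q_def by (rule min.cobounded1)
    have "q * I \<le> H / (2 * (I + 1)) * I" using \<open>I \<ge> 0\<close> by (intro mult_right_mono) (auto simp: q_def)
    also have "\<dots> < H" using \<open>H > 0\<close> \<open>I \<ge> 0\<close> by (simp add: field_simps add_nonneg_pos)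
    finally show False using bound[OF \<open>0 < q\<close> \<open>q \<le> 1/2\<close>] True by simp
  qed
next
  case False
  with assms(1,2) have "W > 0" "I > 0" by auto
  define q where "q = sqrt W / sqrt I"
  have "0 < q" using \<open>W > 0\<close> \<open>I > 0\<close> by (simp add: q_def)
  have "2 * sqrt W \<le> sqrt I"
    using real_sqrt_le_mono[OF assms(2)] by (simp add: real_sqrt_mult)
  then have "q \<le> 1/2" using \<open>I > 0\<close> by (simp add: q_def field_simps)
  have "q * I = sqrt (W * I)" "1/q * W = sqrt (W * I)"
    using \<open>W > 0\<close> \<open>I > 0\<close> by (simp_all add: q_def real_sqrt_mult field_simps)
  then show ?thesis using bound[OF \<open>0 < q\<close> \<open>q \<le> 1/2\<close>] by (simp add: left_diff_distrib)
qed

theorem mainTheorem1: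
  fixes N :: nat and \<nu> :: "bool list \<Rightarrow> real"
  assumes "N \<ge> 1"
    and "is_prob N \<nu>"
    and "fisher_info N \<nu> \<ge> ereal (4 * W1 N \<nu> (unif N))"
  shows "fisher_info N \<nu> = \<infinity> \<or>
         rel_entropy N \<nu> \<le> 2 * sqrt (W1 N \<nu> (unif N) * real_of_ereal (fisher_info N \<nu>))
                              - 2 * W1 N \<nu> (unif N)"
proof (cases "fisher_info N \<nu> = \<infinity>")
  case False
  define I where "I = (\<Sum>i<N. fisher_sum N i (dens N \<nu>)) / (2 * 2 ^ N)"
  have I: "fisher_info N \<nu> = ereal I" using fisher_info_eq[OF False] by (simp add: I_def)
  have "rel_entropy N \<nu> \<le> 2 * sqrt (W1 N \<nu> (unif N) * I) - 2 * W1 N \<nu> (unif N)"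
  proof (rule le_optimal_noise_bound)
    show "0 \<le> W1 N \<nu> (unif N)" using W1_nonneg[OF assms(2) is_prob_unif] .
    show "4 * W1 N \<nu> (unif N) \<le> I" using assms(3) by (simp add: I)
    show "rel_entropy N \<nu> \<le> q * I + (1/q - 2) * W1 N \<nu> (unif N)" if "0 < q" "q \<le> 1/2" for q
      using rel_entropy_le_noise_bound[OF assms(2) dens_pos_of_fisher_finite[OF assms(2) False] that]
      by (simp add: I_def)
  qed
  then show ?thesis by (simp add: I)
qed simp

end
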